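(* Let $n\ge 2$ and $y=(y_1,\dots,y_{n-1},q)\in\mathbb C^n$. The following are equivalent (in each condition, "for all $j$" means for all $j=1,\dots,[n/2]$): (1) $y\in\widetilde{\mathbb G}_n$; (2) $\binom{n}{j}-y_jz-y_{n-j}w+\binom{n}{j}qzw\neq 0$ for all $z,w\in\overline{\mathbb D}$ and all $j$; (3) for all $j$: $\|\Phi_j(\cdot,y)\|_{H^\infty}<1$, and if $y_jy_{n-j}=\binom{n}{j}^2q$ then in addition $|y_{n-j}|<\binom{n}{j}$; (3') for all $j$: $\|\Phi_{n-j}(\cdot,y)\|_{H^\infty}<1$, and if $y_jy_{n-j}=\binom{n}{j}^2q$ then in addition $|y_j|<\binom{n}{j}$; (4) for all $j$: $\binom{n}{j}|y_j-\bar y_{n-j}q|+|y_jy_{n-j}-\binom{n}{j}^2q|<\binom{n}{j}^2-|y_{n-j}|^2$; (4') for all $j$: $\binom{n}{j}|y_{n-j}-\bar y_{j}q|+|y_jy_{n-j}-\binom{n}{j}^2q|<\binom{n}{j}^2-|y_{j}|^2$; (5) for all $j$: $|y_j|^2-|y_{n-j}|^2+\binom{n}{j}^2|q|^2+2\binom{n}{j}|y_{n-j}-\bar y_jq|<\binom{n}{j}^2$ and $|y_{n-j}|<\binom{n}{j}$; (5') for all $j$: $|y_{n-j}|^2-|y_{j}|^2+\binom{n}{j}^2|q|^2+2\binom{n}{j}|y_{j}-\bar y_{n-j}q|<\binom{n}{j}^2$ and $|y_{j}|<\binom{n}{j}$; (6) $|q|<1$ and $|y_j|^2+|y_{n-j}|^2-\binom{n}{j}^2|q|^2+2|y_jy_{n-j}-\binom{n}{j}^2q|<\binom{n}{j}^2$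 for all $j$; (7) $|y_{n-j}-\bar y_jq|+|y_j-\bar y_{n-j}q|<\binom{n}{j}(1-|q|^2)$ for all $j$; (8) there exist $2\times 2$ complex matrices $B_1,\dots,B_{[n/2]}$ with $\|B_j\|<1$, $y_j=\binom{n}{j}[B_j]_{11}$, $y_{n-j}=\binom{n}{j}[B_j]_{22}$ for all $j$, and $\det B_1=\dots=\det B_{[n/2]}=q$; (9) the same as (8) with the $B_j$ additionally symmetric matrices.
   Context: $\mathbb D$ is the open unit disc, $[x]$ the integer part, $\|\cdot\|$ the operator norm. $\widetilde{\mathbb G}_n=\{(y_1,\dots,y_{n-1},q)\in\mathbb C^n: q\in\mathbb D,\ y_j=\beta_j+\bar\beta_{n-j}q$ for some $\beta_j\in\mathbb C$ with $|\beta_j|+|\beta_{n-j}|<\binom{n}{j}$, $j=1,\dots,n-1\}$. For $z\in\mathbb C$, $y=(y_1,\dots,y_{n-1},q)\in\mathbb C^n$ and $j\in\{1,\dots,n-1\}$, define $\Phi_j(z,y)=\dfrac{\binom{n}{j}qz-y_j}{y_{n-j}z-\binom{n}{j}}$ if $y_{n-j}z\ne\binom{n}{j}$ and $y_jy_{n-j}\neq\binom{n}{j}^2q$, and $\Phi_j(z,y)=y_j/\binom{n}{j}$ if $y_jy_{n-j}=\binom{n}{j}^2q$. Set $\|\Phi_j(\cdot,y)\|_{H^\infty}=\sup_{z\in\mathbb D}|\Phi_j(z,y)|$, understood as $+\infty$ if $\Phi_j(\cdot,y)$ is undefined somewhere on $\mathbb D$ or unbounded there. *)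

theory Defs
  imports "HOL-Analysis.Analysis"
begin

text \<open>A point of C^n is represented by a family y :: nat => complex (only the
  entries y 1, ..., y (n-1) matter) together with the last coordinate q.\<close>

definition cb :: "nat \<Rightarrow> nat \<Rightarrow> real" where
  "cb n j = real (n choose j)"

definition tetrablock_n :: "nat \<Rightarrow> (nat \<Rightarrow> complex) \<Rightarrow> complex \<Rightarrow> bool" where
  "tetrablock_n n y q \<longleftrightarrow> cmod q < 1 \<and>
     (\<exists>\<beta>::nat \<Rightarrow> complex. \<forall>j\<in>{1..n-1}.
        y j = \<beta> j + cnj (\<beta> (n - j)) * q \<and>
        cmod (\<beta> j) + cmod (\<beta> (n - j)) < cb n j)"

definition Phi_defined :: "nat \<Rightarrow> (nat \<Rightarrow> complex) \<Rightarrow> complex \<Rightarrow> nat \<Rightarrow> complex \<Rightarrow> bool" where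
  "Phi_defined n y q j z \<longleftrightarrow>
     y j * y (n - j) = of_real (cb n j ^ 2) * q \<or> y (n - j) * z \<noteq> of_real (cb n j)"

definition Phi :: "nat \<Rightarrow> (nat \<Rightarrow> complex) \<Rightarrow> complex \<Rightarrow> nat \<Rightarrow> complex \<Rightarrow> complex" where
  "Phi n y q j z =
     (if y j * y (n - j) = of_real (cb n j ^ 2) * q then y j / of_real (cb n j)
      else (of_real (cb n j) * q * z - y j) / (y (n - j) * z - of_real (cb n j)))"

definition Phi_Hinf :: "nat \<Rightarrow> (nat \<Rightarrow> complex) \<Rightarrow> complex \<Rightarrow> nat \<Rightarrow> ereal" where
  "Phi_Hinf n y q j =
     (if \<forall>z\<in>ball 0 1. Phi_defined n y q j z
      then (SUP z\<in>ball 0 1. ereal (cmod (Phi n y q j z)))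
      else \<infinity>)"

end

theory Submission
  imports Defs
begin

definition tetrablock :: "complex \<Rightarrow> complex \<Rightarrow> complex \<Rightarrow> bool" where
  "tetrablock a b p \<longleftrightarrow> (\<forall>z\<in>cball 0 1. \<forall>w\<in>cball 0 1. 1 - a * z - b * w + p * z * w \<noteq> 0)"

lemma tetrablock_commute: "tetrablock a b p \<longleftrightarrow> tetrablock b a p"
proof -
  have "1 - a * z - b * w + p * z * w = 1 - b * w - a * z + p * w * z" for z w :: complex
    by (simp add: algebra_simps)
  then show ?thesis
    unfolding tetrablock_def by metis
qed

lemma norm_mult_less_one: "cmod b < 1 \<Longrightarrow> cmod w \<le> 1 \<Longrightarrow> cmod (b * w) < 1"
  by (metis le_less_trans mult_left_le norm_ge_zero norm_mult)

lemma one_minus_mult_nonzero_on_cball_iff: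
  "(\<forall>z\<in>cball 0 1. 1 - c * z \<noteq> 0) \<longleftrightarrow> cmod c < 1"
proof
  assume nonzero: "\<forall>z\<in>cball 0 1. 1 - c * z \<noteq> 0"
  show "cmod c < 1"
  proof (rule ccontr)
    assume "\<not> cmod c < 1"
    then have "c \<noteq> 0" "1 / c \<in> cball 0 1"
      by (auto simp: norm_divide divide_le_eq_1)
    with nonzero show False
      by fastforce
  qed
next
  assume "cmod c < 1"
  then have "cmod (c * z) \<noteq> 1" if "z \<in> cball 0 1" for z
    using norm_mult_less_one[of c z] that by simp
  then show "\<forall>z\<in>cball 0 1. 1 - c * z \<noteq> 0"
    by fastforce
qed

lemma tetrablock_degenerate_iff:
  assumes "a * b = p"
  shows "tetrablock a b p \<longleftrightarrow> cmod a < 1 \<and> cmod b < 1"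
proof -
  have "1 - a * z - b * w + p * z * w = (1 - a * z) * (1 - b * w)" for z w
    using assms by (simp add: algebra_simps)
  then have "tetrablock a b p \<longleftrightarrow> (\<forall>z\<in>cball 0 1. 1 - a * z \<noteq> 0) \<and> (\<forall>w\<in>cball 0 1. 1 - b * w \<noteq> 0)"
    unfolding tetrablock_def by (metis mult_eq_0_iff)
  then show ?thesis
    by (simp only: one_minus_mult_nonzero_on_cball_iff)
qed

lemma tetrablock_iff_moebius_bound:
  "tetrablock a b p \<longleftrightarrow> cmod b < 1 \<and> (\<forall>w. cmod w \<le> 1 \<longrightarrow> cmod (p * w - a) < cmod (b * w - 1))"
proof
  assume tb: "tetrablock a b p"
  have b: "cmod b < 1"
  proof (rule ccontr)
    assume "\<not> cmod b < 1"
    then have "b \<noteq> 0" "cmod (1 / b) \<le> 1"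
      by (auto simp: norm_divide divide_le_eq_1)
    moreover have "1 - a * 0 - b * (1 / b) + p * 0 * (1 / b) = 0"
      using \<open>b \<noteq> 0\<close> by simp
    ultimately show False
      using tb unfolding tetrablock_def by (meson centre_in_cball mem_cball_0 zero_le_one)
  qed
  moreover have "cmod (p * w - a) < cmod (b * w - 1)" if w: "cmod w \<le> 1" for w
  proof (rule ccontr)
    assume "\<not> ?thesis"
    moreover have "b * w - 1 \<noteq> 0"
      using norm_mult_less_one[OF b w] by auto
    ultimately have "p * w - a \<noteq> 0" and z: "cmod ((b * w - 1) / (p * w - a)) \<le> 1"
      by (auto simp: norm_divide divide_le_eq_1)
    moreover have "1 - a * ((b * w - 1) / (p * w - a)) - b * w + p * ((b * w - 1) / (p * w - a)) * w = 0"
      using \<open>p * w - a \<noteq> 0\<close> by (simp add: field_simps)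
    moreover have "(b * w - 1) / (p * w - a) \<in> cball 0 1" "w \<in> cball 0 1"
      using z w by simp_all
    ultimately show False
      using tb unfolding tetrablock_def by blast
  qed
  ultimately show "cmod b < 1 \<and> (\<forall>w. cmod w \<le> 1 \<longrightarrow> cmod (p * w - a) < cmod (b * w - 1))"
    by blast
next
  assume "cmod b < 1 \<and> (\<forall>w. cmod w \<le> 1 \<longrightarrow> cmod (p * w - a) < cmod (b * w - 1))"
  then have bound: "cmod (p * w - a) < cmod (b * w - 1)" if "cmod w \<le> 1" for w
    using that by blast
  show "tetrablock a b p"
    unfolding tetrablock_def
  proof (intro ballI)
    fix z w :: complex
    assume "z \<in> cball 0 1" "w \<in> cball 0 1"
    then have "cmod (z * (p * w - a)) < cmod (b * w - 1)"
      using bound by (simp add: norm_mult) (meson le_less_trans mult_left_le_one_le norm_ge_zero)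
    then have "z * (p * w - a) \<noteq> b * w - 1"
      by auto
    moreover have "1 - a * z - b * w + p * z * w = z * (p * w - a) - (b * w - 1)"
      by (simp add: algebra_simps)
    ultimately show "1 - a * z - b * w + p * z * w \<noteq> 0"
      by (metis right_minus_eq)
  qed
qed

lemma exists_unimodular_mult_eq_norm: "\<exists>w. cmod w = 1 \<and> w * u = of_real (cmod u)"
proof (cases "u = 0")
  case False
  have "cnj u / of_real (cmod u) * u = of_real (cmod u)"
    using False by (simp add: field_simps power2_eq_square flip: complex_norm_square)
  then show ?thesis
    using False by (intro exI[of _ "cnj u / of_real (cmod u)"]) (simp add: norm_divide)
qed (auto intro: exI[of _ 1])

lemma all_unimodular_Re_mult_less_iff: "(\<forall>w. cmod w = 1 \<longrightarrow> Re (w * u) < r) \<longleftrightarrow> cmod u < r"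
proof
  assume "\<forall>w. cmod w = 1 \<longrightarrow> Re (w * u) < r"
  moreover obtain w where "cmod w = 1" "w * u = of_real (cmod u)"
    using exists_unimodular_mult_eq_norm by blast
  ultimately show "cmod u < r"
    by (metis Re_complex_of_real)
next
  assume "cmod u < r"
  then show "\<forall>w. cmod w = 1 \<longrightarrow> Re (w * u) < r"
    by (metis complex_Re_le_cmod le_less_trans mult_1 norm_mult)
qed

lemma norm_less_iff_power2_less: "cmod x < cmod y \<longleftrightarrow> cmod x ^ 2 < cmod y ^ 2"
  using power_mono_iff[of "cmod y" "cmod x" 2] by (simp flip: not_le)

lemma moebius_bound_on_circle_iff:
  "(\<forall>w. cmod w = 1 \<longrightarrow> cmod (p * w - a) < cmod (b * w - 1)) \<longleftrightarrow>
     cmod a ^ 2 - cmod b ^ 2 + cmod p ^ 2 + 2 * cmod (b - cnj a * p) < 1"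
proof -
  have expand: "cmod (p * w - a) ^ 2 - cmod (b * w - 1) ^ 2
      = (cmod p ^ 2 - cmod b ^ 2) * cmod w ^ 2 + 2 * Re (w * (b - cnj a * p)) + cmod a ^ 2 - 1" for w
    by (simp only: cmod_power2) (simp add: algebra_simps power2_eq_square)
  define r where "r = (1 - cmod a ^ 2 + cmod b ^ 2 - cmod p ^ 2) / 2"
  have "cmod (p * w - a) < cmod (b * w - 1) \<longleftrightarrow> Re (w * (b - cnj a * p)) < r"
    if "cmod w = 1" for w
    using expand[of w] unfolding norm_less_iff_power2_less[of "p * w - a"] that r_def
    by (simp only: power_one mult_1_right) auto
  then have "(\<forall>w. cmod w = 1 \<longrightarrow> cmod (p * w - a) < cmod (b * w - 1)) \<longleftrightarrow>
      (\<forall>w. cmod w = 1 \<longrightarrow> Re (w * (b - cnj a * p)) < r)"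
    by blast
  also have "\<dots> \<longleftrightarrow> cmod (b - cnj a * p) < r"
    by (rule all_unimodular_Re_mult_less_iff)
  also have "\<dots> \<longleftrightarrow> cmod a ^ 2 - cmod b ^ 2 + cmod p ^ 2 + 2 * cmod (b - cnj a * p) < 1"
    unfolding r_def by auto
  finally show ?thesis .
qed

lemma moebius_numerator_identity:
  "(a - p * w) * (1 - of_real (cmod b ^ 2)) = (a - cnj b * p) * (1 - b * w) + (a * b - p) * (w - cnj b)"
  unfolding complex_norm_square by (simp add: algebra_simps)

lemma norm_one_minus_of_real: "r \<le> 1 \<Longrightarrow> cmod (1 - of_real r) = 1 - r"
  by (metis abs_of_nonneg diff_ge_0_iff_ge norm_of_real of_real_1 of_real_diff)

lemma moebius_numerator_bound:
  assumes "cmod b \<le> 1" "cmod w \<le> 1"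
  shows "cmod (p * w - a) * (1 - cmod b ^ 2)
           \<le> (cmod (a - cnj b * p) + cmod (a * b - p)) * cmod (b * w - 1)"
proof -
  have "cmod (1 - b * w) ^ 2 - cmod (w - cnj b) ^ 2 = (1 - cmod w ^ 2) * (1 - cmod b ^ 2)"
    by (simp only: cmod_power2) (simp add: algebra_simps power2_eq_square)
  moreover have "0 \<le> (1 - cmod w ^ 2) * (1 - cmod b ^ 2)"
    using assms by (simp add: abs_square_le_1)
  ultimately have "cmod (w - cnj b) ^ 2 \<le> cmod (1 - b * w) ^ 2"
    by linarith
  then have blaschke: "cmod (w - cnj b) \<le> cmod (1 - b * w)"
    by (rule power2_le_imp_le) simp
  have "cmod (p * w - a) * (1 - cmod b ^ 2) = cmod ((a - p * w) * (1 - of_real (cmod b ^ 2)))"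
    using assms by (simp add: norm_mult norm_minus_commute abs_square_le_1 norm_one_minus_of_real del: of_real_power)
  also have "\<dots> \<le> cmod (a - cnj b * p) * cmod (1 - b * w) + cmod (a * b - p) * cmod (w - cnj b)"
    unfolding moebius_numerator_identity by (metis norm_mult norm_triangle_ineq)
  also have "\<dots> \<le> (cmod (a - cnj b * p) + cmod (a * b - p)) * cmod (b * w - 1)"
    using blaschke by (simp add: norm_minus_commute distrib_right mult_left_mono)
  finally show ?thesis .
qed

lemma cond4_imp_tetrablock:
  assumes cond4: "cmod (a - cnj b * p) + cmod (a * b - p) < 1 - cmod b ^ 2"
  shows "tetrablock a b p"
proof -
  have "cmod b ^ 2 < 1"
    using cond4 norm_ge_zero[of "a - cnj b * p"] norm_ge_zero[of "a * b - p"] by linarith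
  then have b: "cmod b < 1"
    by (simp add: abs_square_less_1)
  have "cmod (p * w - a) < cmod (b * w - 1)" if w: "cmod w \<le> 1" for w
  proof -
    have "0 < cmod (b * w - 1)"
      using norm_mult_less_one[OF b w] by auto
    have "cmod (p * w - a) * (1 - cmod b ^ 2)
        \<le> (cmod (a - cnj b * p) + cmod (a * b - p)) * cmod (b * w - 1)"
      using b w by (intro moebius_numerator_bound) simp_all
    also have "\<dots> < (1 - cmod b ^ 2) * cmod (b * w - 1)"
      using cond4 \<open>0 < cmod (b * w - 1)\<close> by (rule mult_strict_right_mono)
    finally show ?thesis
      using \<open>cmod b ^ 2 < 1\<close> by (simp add: mult.commute)
  qed
  then show ?thesis
    using b tetrablock_iff_moebius_bound by blast
qed

lemma moebius_bound_on_circle_imp_cond4: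
  assumes b: "cmod b < 1" and circle: "\<forall>w. cmod w = 1 \<longrightarrow> cmod (p * w - a) < cmod (b * w - 1)"
  shows "cmod (a - cnj b * p) + cmod (a * b - p) < 1 - cmod b ^ 2"
proof -
  define u D where "u = a - cnj b * p" and "D = a * b - p"
  obtain s t where s: "cmod s = 1" "s * u = of_real (cmod u)" and t: "cmod t = 1" "t * D = of_real (cmod D)"
    using exists_unimodular_mult_eq_norm by metis
  define \<zeta> where "\<zeta> = t / s"
  have "s \<noteq> 0"
    using s by auto
  then have "s * (u + D * \<zeta>) = of_real (cmod u + cmod D)"
    using s t by (simp add: \<zeta>_def field_simps)
  then have aligned: "cmod (u + D * \<zeta>) = cmod u + cmod D"
    using s by (metis abs_of_nonneg add_nonneg_nonneg mult_1 norm_ge_zero norm_mult norm_of_real)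
  have \<zeta>: "cmod \<zeta> = 1" "\<zeta> * cnj \<zeta> = 1"
    using s t by (simp_all add: \<zeta>_def norm_divide flip: complex_norm_square)
  have nz: "1 + \<zeta> * b \<noteq> 0"
    using b \<zeta> by (metis add_eq_0_iff less_irrefl mult_1 norm_minus_cancel norm_mult norm_one)
  \<comment> \<open>the point of the circle where the bound of \<open>moebius_numerator_bound\<close> is attained\<close>
  define w where "w = (\<zeta> + cnj b) / (1 + \<zeta> * b)"
  have "\<zeta> + cnj b = \<zeta> * cnj (1 + \<zeta> * b)"
    using \<zeta> by (simp add: algebra_simps)
  then have "cmod (\<zeta> + cnj b) = cmod (1 + \<zeta> * b)"
    using \<zeta> by (simp only: norm_mult complex_mod_cnj)
  then have w: "cmod w = 1"
    using nz by (simp add: w_def norm_divide)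
  have w_minus: "w - cnj b = \<zeta> * (1 - b * w)"
    using nz by (simp add: w_def field_simps)
  have "(a - p * w) * (1 - of_real (cmod b ^ 2)) = (u + D * \<zeta>) * (1 - b * w)"
    unfolding moebius_numerator_identity w_minus u_def D_def by (simp add: algebra_simps)
  moreover have K: "0 < 1 - cmod b ^ 2"
    using b by (simp add: abs_square_less_1)
  ultimately have "cmod (a - p * w) * (1 - cmod b ^ 2) = (cmod u + cmod D) * cmod (1 - b * w)"
    using aligned by (metis norm_mult norm_one_minus_of_real less_imp_le diff_gt_0_iff_gt)
  moreover have "0 < cmod (b * w - 1)"
    using norm_mult_less_one[OF b, of w] w by auto
  ultimately have "(cmod u + cmod D) * cmod (b * w - 1) < (1 - cmod b ^ 2) * cmod (b * w - 1)"
    using circle w K by (metis mult.commute mult_strict_left_mono norm_minus_commute)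
  then show ?thesis
    using \<open>0 < cmod (b * w - 1)\<close> unfolding u_def D_def by simp
qed

lemma tetrablock_iff_cond5:
  "tetrablock a b p \<longleftrightarrow> cmod a ^ 2 - cmod b ^ 2 + cmod p ^ 2 + 2 * cmod (b - cnj a * p) < 1 \<and> cmod b < 1"
  using tetrablock_iff_moebius_bound[of a b p] moebius_bound_on_circle_iff[of p a b]
    moebius_bound_on_circle_imp_cond4[of b p a] cond4_imp_tetrablock[of a b p]
  by auto

lemma tetrablock_iff_cond4:
  "tetrablock a b p \<longleftrightarrow> cmod (a - cnj b * p) + cmod (a * b - p) < 1 - cmod b ^ 2"
  using tetrablock_iff_moebius_bound[of a b p] moebius_bound_on_circle_imp_cond4[of b p a]
    cond4_imp_tetrablock[of a b p]
  by auto

lemma cond6_imp_norm_sq_add_less_one: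
  assumes p: "cmod p < 1" and cond6: "cmod a ^ 2 + cmod b ^ 2 - cmod p ^ 2 + 2 * cmod (a * b - p) < 1"
  shows "cmod b ^ 2 + cmod (a * b - p) < 1"
proof -
  define \<alpha> \<beta> \<pi> \<delta> where "\<alpha> = cmod a" "\<beta> = cmod b" "\<pi> = cmod p" "\<delta> = cmod (a * b - p)"
  have "\<bar>\<alpha> * \<beta> - \<pi>\<bar> \<le> \<delta>"
    unfolding \<alpha>_\<beta>_\<pi>_\<delta>_def by (metis norm_mult norm_triangle_ineq3)
  then have "\<pi> - \<alpha> * \<beta> \<le> \<delta>" "\<alpha> * \<beta> - \<pi> \<le> \<delta>"
    by (simp_all add: abs_le_iff)
  moreover have sum: "\<alpha> ^ 2 + \<beta> ^ 2 - \<pi> ^ 2 + 2 * \<delta> < 1"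
    using cond6 unfolding \<alpha>_\<beta>_\<pi>_\<delta>_def .
  ultimately have "\<alpha> ^ 2 + \<beta> ^ 2 - 2 * (\<alpha> * \<beta>) \<le> 1 - 2 * \<pi> + \<pi> ^ 2"
    "\<alpha> ^ 2 + \<beta> ^ 2 + 2 * (\<alpha> * \<beta>) \<le> 1 + 2 * \<pi> + \<pi> ^ 2"
    by linarith+
  then have "\<bar>\<beta> - \<alpha>\<bar> ^ 2 \<le> (1 - \<pi>) ^ 2" "(\<beta> + \<alpha>) ^ 2 \<le> (1 + \<pi>) ^ 2"
    by (simp_all add: power2_eq_square algebra_simps)
  moreover have "0 \<le> \<pi>" "\<pi> < 1" "0 \<le> \<beta> + \<alpha>"
    using p unfolding \<alpha>_\<beta>_\<pi>_\<delta>_def by simp_all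
  ultimately have "\<bar>\<beta> - \<alpha>\<bar> \<le> 1 - \<pi>" "\<beta> + \<alpha> \<le> 1 + \<pi>"
    using power2_le_imp_le[of "\<bar>\<beta> - \<alpha>\<bar>" "1 - \<pi>"] power2_le_imp_le[of "\<beta> + \<alpha>" "1 + \<pi>"]
    by linarith+
  have "\<beta> ^ 2 - \<alpha> ^ 2 = (\<beta> - \<alpha>) * (\<beta> + \<alpha>)"
    by (simp add: power2_eq_square algebra_simps)
  also have "\<dots> \<le> \<bar>\<beta> - \<alpha>\<bar> * (\<beta> + \<alpha>)"
    using \<open>0 \<le> \<beta> + \<alpha>\<close> by (simp add: mult_right_mono)
  also have "\<dots> \<le> (1 - \<pi>) * (1 + \<pi>)"
    using \<open>\<bar>\<beta> - \<alpha>\<bar> \<le> 1 - \<pi>\<close> \<open>\<beta> + \<alpha> \<le> 1 + \<pi>\<close> \<open>0 \<le> \<beta> + \<alpha>\<close> \<open>\<pi> < 1\<close>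
    by (intro mult_mono) simp_all
  also have "\<dots> = 1 - \<pi> ^ 2"
    by (simp add: power2_eq_square algebra_simps)
  finally have "\<beta> ^ 2 + \<delta> < 1"
    using sum by linarith
  then show ?thesis
    unfolding \<alpha>_\<beta>_\<pi>_\<delta>_def .
qed

lemma cond4_iff_cond6:
  "cmod (a - cnj b * p) + cmod (a * b - p) < 1 - cmod b ^ 2 \<longleftrightarrow>
     cmod p < 1 \<and> cmod a ^ 2 + cmod b ^ 2 - cmod p ^ 2 + 2 * cmod (a * b - p) < 1"
proof -
  define K u D where "K = 1 - cmod b ^ 2" "u = a - cnj b * p" "D = a * b - p"
  have u_sq: "cmod u ^ 2 = cmod D ^ 2 + K * (cmod a ^ 2 - cmod p ^ 2)"
    unfolding K_u_D_def by (simp only: cmod_power2) (simp add: algebra_simps power2_eq_square)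
  have squared: "cmod u < K - cmod D \<longleftrightarrow> cmod a ^ 2 + cmod b ^ 2 - cmod p ^ 2 + 2 * cmod D < 1"
    if "0 < K - cmod D"
  proof -
    have "cmod u < K - cmod D \<longleftrightarrow> cmod u ^ 2 < (K - cmod D) ^ 2"
      using that by (simp flip: not_le)
    also have "\<dots> \<longleftrightarrow> K * (cmod a ^ 2 - cmod p ^ 2) < K * (K - 2 * cmod D)"
      unfolding u_sq by (simp add: power2_eq_square algebra_simps)
    also have "\<dots> \<longleftrightarrow> cmod a ^ 2 - cmod p ^ 2 < K - 2 * cmod D"
      using that norm_ge_zero[of D] by (intro mult_less_cancel_left_pos) linarith
    also have "\<dots> \<longleftrightarrow> cmod a ^ 2 + cmod b ^ 2 - cmod p ^ 2 + 2 * cmod D < 1"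
      unfolding K_u_D_def by auto
    finally show ?thesis .
  qed
  show ?thesis
    unfolding K_u_D_def[symmetric]
  proof
    assume cond4: "cmod u + cmod D < K"
    then have "0 < K"
      using norm_ge_zero[of u] norm_ge_zero[of D] by linarith
    have "D - b * u = - p * of_real K"
      unfolding K_u_D_def of_real_diff of_real_1 complex_norm_square by (simp add: algebra_simps)
    then have "cmod p * K = cmod (D - b * u)"
      using \<open>0 < K\<close> by (simp add: norm_mult)
    also have "\<dots> \<le> cmod D + cmod b * cmod u"
      by (metis norm_mult norm_triangle_ineq4)
    also have "\<dots> \<le> cmod D + cmod u"
      using \<open>0 < K\<close> unfolding K_u_D_def by (simp add: abs_square_less_1 mult_left_le_one_le)
    also have "\<dots> < K"
      using cond4 by simp
    finally have "cmod p < 1"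
      using \<open>0 < K\<close> by (simp add: mult_less_cancel_right2)
    moreover have "0 < K - cmod D"
      using cond4 norm_ge_zero[of u] by linarith
    ultimately show "cmod p < 1 \<and> cmod a ^ 2 + cmod b ^ 2 - cmod p ^ 2 + 2 * cmod D < 1"
      using cond4 squared by auto
  next
    assume "cmod p < 1 \<and> cmod a ^ 2 + cmod b ^ 2 - cmod p ^ 2 + 2 * cmod D < 1"
    moreover from this have "0 < K - cmod D"
      using cond6_imp_norm_sq_add_less_one[of p a b] unfolding K_u_D_def by auto
    ultimately show "cmod u + cmod D < K"
      using squared by auto
  qed
qed

lemma tetrablock_iff_cond6:
  "tetrablock a b p \<longleftrightarrow> cmod p < 1 \<and> cmod a ^ 2 + cmod b ^ 2 - cmod p ^ 2 + 2 * cmod (a * b - p) < 1"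
  using tetrablock_iff_cond4 cond4_iff_cond6 by blast

lemma cond7_imp_cond5:
  assumes cond7: "cmod (b - cnj a * p) + cmod (a - cnj b * p) < 1 - cmod p ^ 2"
  shows "cmod a ^ 2 - cmod b ^ 2 + cmod p ^ 2 + 2 * cmod (b - cnj a * p) < 1 \<and> cmod b < 1"
proof -
  define k s t where "k = 1 - cmod p ^ 2" "s = cmod (a - cnj b * p)" "t = cmod (b - cnj a * p)"
  have "0 \<le> s" "0 \<le> t" "t + s < k"
    using cond7 unfolding k_s_t_def by simp_all
  then have "0 < k"
    by linarith
  then have "cmod p < 1"
    unfolding k_s_t_def by (simp add: abs_square_less_1)
  have "of_real k * b = (b - cnj a * p) + cnj (a - cnj b * p) * p"
    unfolding k_s_t_def of_real_diff of_real_1 complex_norm_square by (simp add: algebra_simps)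
  then have "cmod b * k = cmod ((b - cnj a * p) + cnj (a - cnj b * p) * p)"
    using \<open>0 < k\<close> by (metis abs_of_pos mult.commute norm_mult norm_of_real)
  also have "\<dots> \<le> t + s * cmod p"
    unfolding k_s_t_def by (metis complex_mod_cnj norm_mult norm_triangle_ineq)
  also have "\<dots> \<le> t + s"
    using \<open>cmod p < 1\<close> \<open>0 \<le> s\<close> by (simp add: mult_left_le)
  also have "\<dots> < k"
    by fact
  finally have "cmod b < 1"
    using \<open>0 < k\<close> by (simp add: mult_less_cancel_right2)
  have "s ^ 2 - t ^ 2 = k * (cmod a ^ 2 - cmod b ^ 2)"
    unfolding k_s_t_def by (simp only: cmod_power2) (simp add: algebra_simps power2_eq_square)
  moreover have "s ^ 2 < (k - t) ^ 2"
    using \<open>0 \<le> s\<close> \<open>t + s < k\<close> by (simp add: power_strict_mono)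
  ultimately have "k * (cmod a ^ 2 - cmod b ^ 2) < k * (k - 2 * t)"
    by (simp add: power2_eq_square algebra_simps)
  then have "cmod a ^ 2 - cmod b ^ 2 < k - 2 * t"
    using \<open>0 < k\<close> by simp
  with \<open>cmod b < 1\<close> show ?thesis
    unfolding k_s_t_def by simp
qed

lemma tetrablock_iff_cond7:
  "tetrablock a b p \<longleftrightarrow> cmod (b - cnj a * p) + cmod (a - cnj b * p) < 1 - cmod p ^ 2"
  using tetrablock_iff_cond5[of a b p] tetrablock_iff_cond5[of b a p] tetrablock_commute[of a b p]
    cond7_imp_cond5[of b a p]
  by auto

definition moebius :: "complex \<Rightarrow> complex \<Rightarrow> complex \<Rightarrow> complex \<Rightarrow> complex" where
  "moebius a b p z = (if a * b = p then a else (p * z - a) / (b * z - 1))"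

definition moebius_Hinf :: "complex \<Rightarrow> complex \<Rightarrow> complex \<Rightarrow> ereal" where
  "moebius_Hinf a b p =
     (if \<forall>z\<in>ball 0 1. a * b = p \<or> b * z \<noteq> 1
      then (SUP z\<in>ball 0 1. ereal (cmod (moebius a b p z))) else \<infinity>)"

lemma tetrablock_imp_moebius_Hinf_less_one:
  assumes "tetrablock a b p"
  shows "moebius_Hinf a b p < 1"
proof -
  have b: "cmod b < 1" and cond4: "cmod (a - cnj b * p) + cmod (a * b - p) < 1 - cmod b ^ 2"
    using assms tetrablock_iff_moebius_bound tetrablock_iff_cond4 by blast+
  define r where "r = (cmod (a - cnj b * p) + cmod (a * b - p)) / (1 - cmod b ^ 2)"
  have K: "0 < 1 - cmod b ^ 2"
    using b by (simp add: abs_square_less_1)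
  have "cmod (moebius a b p z) \<le> r" if "z \<in> ball 0 1" for z
  proof (cases "a * b = p")
    case True
    have "a - cnj b * p = a * of_real (1 - cmod b ^ 2)"
      unfolding True[symmetric] of_real_diff of_real_1 complex_norm_square by (simp add: algebra_simps)
    then show ?thesis
      using True K by (simp add: moebius_def r_def norm_mult norm_one_minus_of_real del: of_real_power)
  next
    case False
    have z: "cmod z \<le> 1"
      using that by simp
    have "0 < cmod (b * z - 1)"
      using norm_mult_less_one[OF b z] by auto
    moreover have "cmod (p * z - a) \<le> r * cmod (b * z - 1)"
      using moebius_numerator_bound[of b z p a] b z K by (simp add: r_def field_simps)
    ultimately show ?thesis
      using False by (simp add: moebius_def norm_divide divide_le_eq)
  qed
  then have "(SUP z\<in>ball 0 1. ereal (cmod (moebius a b p z))) \<le> ereal r"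
    by (intro SUP_least) simp
  also have "ereal r < 1"
    using cond4 K by (simp add: r_def)
  finally have "(SUP z\<in>ball 0 1. ereal (cmod (moebius a b p z))) < 1" .
  moreover have "b * z \<noteq> 1" if "z \<in> ball 0 1" for z
    using norm_mult_less_one[OF b, of z] that by auto
  ultimately show ?thesis
    unfolding moebius_Hinf_def by auto
qed

lemma moebius_Hinf_less_one_imp_bound:
  assumes "a * b \<noteq> p" "moebius_Hinf a b p < 1"
  obtains s where "s < 1" "\<And>w. cmod w \<le> 1 \<Longrightarrow> cmod (p * w - a) \<le> s * cmod (b * w - 1)"
proof -
  have defined: "\<forall>z\<in>ball 0 1. b * z \<noteq> 1"
    and sup: "(SUP z\<in>ball 0 1. ereal (cmod (moebius a b p z))) < 1"
    using assms by (auto simp: moebius_Hinf_def split: if_splits)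
  obtain s where s: "(SUP z\<in>ball 0 1. ereal (cmod (moebius a b p z))) < ereal s" "s < 1"
    using ereal_dense2[OF sup] by auto
  have "cmod (p * z - a) \<le> s * cmod (b * z - 1)" if "z \<in> ball 0 1" for z
  proof -
    have "ereal (cmod (moebius a b p z)) < ereal s"
      using SUP_upper[OF that, of "\<lambda>z. ereal (cmod (moebius a b p z))"] s(1) by (rule le_less_trans)
    then show ?thesis
      using assms(1) defined that by (simp add: moebius_def norm_divide divide_less_eq)
  qed
  then have "ball 0 1 \<subseteq> {w. cmod (p * w - a) \<le> s * cmod (b * w - 1)}"
    by blast
  moreover have "closed {w. cmod (p * w - a) \<le> s * cmod (b * w - 1)}"
    by (intro closed_Collect_le continuous_intros)
  ultimately have "cball 0 1 \<subseteq> {w. cmod (p * w - a) \<le> s * cmod (b * w - 1)}"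
    by (metis closure_ball closure_minimal zero_less_one)
  then have "cmod (p * w - a) \<le> s * cmod (b * w - 1)" if "cmod w \<le> 1" for w
    using that by auto
  with s(2) show thesis
    by (rule that)
qed

lemma moebius_Hinf_less_one_imp_tetrablock:
  assumes "a * b \<noteq> p" "moebius_Hinf a b p < 1"
  shows "tetrablock a b p"
proof -
  obtain s where s: "s < 1" and bound: "\<And>w. cmod w \<le> 1 \<Longrightarrow> cmod (p * w - a) \<le> s * cmod (b * w - 1)"
    using moebius_Hinf_less_one_imp_bound[OF assms] by blast
  have b: "cmod b < 1"
  proof (rule ccontr)
    assume "\<not> cmod b < 1"
    then have "b \<noteq> 0" "cmod (1 / b) \<le> 1"
      by (auto simp: norm_divide divide_le_eq_1)
    then have "p / b = a"
      using bound[of "1 / b"] by simp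
    with \<open>b \<noteq> 0\<close> assms(1) show False
      by (auto simp: field_simps)
  qed
  have "cmod (p * w - a) < cmod (b * w - 1)" if "cmod w \<le> 1" for w
  proof -
    have "0 < cmod (b * w - 1)"
      using norm_mult_less_one[OF b that] by auto
    then have "s * cmod (b * w - 1) < cmod (b * w - 1)"
      using s by (simp add: mult_less_cancel_right2)
    then show ?thesis
      using bound[OF that] by linarith
  qed
  with b show ?thesis
    using tetrablock_iff_moebius_bound by blast
qed

lemma tetrablock_iff_moebius_Hinf:
  "tetrablock a b p \<longleftrightarrow> moebius_Hinf a b p < 1 \<and> (a * b = p \<longrightarrow> cmod b < 1)"
proof (cases "a * b = p")
  case True
  have "moebius_Hinf a b p = ereal (cmod a)"
    using True by (simp add: moebius_Hinf_def moebius_def)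
  then show ?thesis
    using True tetrablock_degenerate_iff[OF True] by simp
qed (use tetrablock_imp_moebius_Hinf_less_one moebius_Hinf_less_one_imp_tetrablock in blast)

lemma contraction_imp_tetrablock:
  fixes M :: "complex^2^2"
  assumes contraction: "onorm (\<lambda>v. M *v v) < 1"
  shows "tetrablock (M $ 1 $ 1) (M $ 2 $ 2) (det M)"
  unfolding tetrablock_def
proof (intro ballI)
  fix z w :: complex
  assume z: "z \<in> cball 0 1" and w: "w \<in> cball 0 1"
  define d :: "complex^2" where "d = vector [z, w]"
  define N :: "complex^2^2" where "N = (\<chi> i j. (if i = j then 1 else 0) - M $ i $ j * d $ j)"
  have N_apply: "N *v x = x - M *v (d * x)" for x
    unfolding N_def by (simp add: vec_eq_iff matrix_vector_mult_def sum_2 forall_2 algebra_simps)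
  have "x = 0" if "N *v x = 0" for x
  proof -
    have "norm (d * x) \<le> norm x"
    proof (rule norm_le_componentwise_cart)
      fix i :: 2
      show "norm ((d * x) $ i) \<le> norm (x $ i)"
        using z w exhaust_2[of i] by (auto simp: d_def norm_mult mult_left_le_one_le)
    qed
    have "norm x = norm (M *v (d * x))"
      using that N_apply by simp
    also have "\<dots> \<le> onorm (\<lambda>v. M *v v) * norm (d * x)"
      by (rule onorm) (rule matrix_vector_mul_bounded_linear)
    also have "\<dots> \<le> onorm (\<lambda>v. M *v v) * norm x"
      using \<open>norm (d * x) \<le> norm x\<close> by (simp add: mult_left_mono onorm_pos_le)
    finally have "norm x \<le> onorm (\<lambda>v. M *v v) * norm x" .
    show "x = 0"
    proof (rule ccontr)
      assume "x \<noteq> 0"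
      then have "onorm (\<lambda>v. M *v v) * norm x < 1 * norm x"
        using contraction by (intro mult_strict_right_mono) auto
      with \<open>norm x \<le> onorm (\<lambda>v. M *v v) * norm x\<close> show False
        by simp
    qed
  qed
  then have "det N \<noteq> 0"
    unfolding invertible_det_nz[symmetric] invertible_left_inverse matrix_left_invertible_ker by blast
  moreover have "det N = 1 - M $ 1 $ 1 * z - M $ 2 $ 2 * w + det M * z * w"
    by (simp add: det_2 N_def d_def algebra_simps)
  ultimately show "1 - M $ 1 $ 1 * z - M $ 2 $ 2 * w + det M * z * w \<noteq> 0"
    by simp
qed

definition hermitian2_max_eigenvalue :: "real \<Rightarrow> real \<Rightarrow> complex \<Rightarrow> real" where
  "hermitian2_max_eigenvalue \<alpha> \<beta> g = (\<alpha> + \<beta> + sqrt ((\<alpha> - \<beta>) ^ 2 + 4 * cmod g ^ 2)) / 2"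

lemma hermitian2_quadratic_form_le:
  "\<alpha> * cmod x1 ^ 2 + \<beta> * cmod x2 ^ 2 + 2 * Re (g * cnj x1 * x2)
     \<le> hermitian2_max_eigenvalue \<alpha> \<beta> g * (cmod x1 ^ 2 + cmod x2 ^ 2)"
proof -
  define S where "S = sqrt ((\<alpha> - \<beta>) ^ 2 + 4 * cmod g ^ 2)"
  define A B where "A = (S - (\<alpha> - \<beta>)) / 2" and "B = (S + (\<alpha> - \<beta>)) / 2"
  have S: "0 \<le> S" "S ^ 2 = (\<alpha> - \<beta>) ^ 2 + 4 * cmod g ^ 2"
    unfolding S_def by simp_all
  then have "\<bar>\<alpha> - \<beta>\<bar> \<le> S"
    by (metis abs_le_square_iff abs_of_nonneg le_add_same_cancel1 mult_nonneg_nonneg power2_abs zero_le_numeral zero_le_power2)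
  then have "0 \<le> A" "0 \<le> B"
    unfolding A_def B_def by auto
  have "A * B = cmod g ^ 2"
    using S unfolding A_def B_def by (simp add: power2_eq_square algebra_simps)
  then have "sqrt A * sqrt B = cmod g"
    by (metis real_sqrt_abs real_sqrt_mult abs_norm_cancel)
  have "2 * Re (g * cnj x1 * x2) \<le> 2 * (cmod g * cmod x1 * cmod x2)"
    using complex_Re_le_cmod[of "g * cnj x1 * x2"] by (simp add: norm_mult)
  also have "\<dots> = 2 * (sqrt A * cmod x1) * (sqrt B * cmod x2)"
    using \<open>sqrt A * sqrt B = cmod g\<close> by (simp add: algebra_simps)
  also have "\<dots> \<le> (sqrt A * cmod x1) ^ 2 + (sqrt B * cmod x2) ^ 2"
    by (rule sum_squares_bound)
  also have "\<dots> = A * cmod x1 ^ 2 + B * cmod x2 ^ 2"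
    using \<open>0 \<le> A\<close> \<open>0 \<le> B\<close> by (simp add: power_mult_distrib)
  finally show ?thesis
    unfolding hermitian2_max_eigenvalue_def S_def[symmetric] A_def B_def by (simp add: field_simps)
qed

lemma hermitian2_max_eigenvalue_less_one:
  assumes "cmod g ^ 2 = \<alpha> * \<beta> - P" "\<alpha> + \<beta> < 1 + P" "P < 1"
  shows "hermitian2_max_eigenvalue \<alpha> \<beta> g < 1"
proof -
  have "0 \<le> 2 - (\<alpha> + \<beta>)"
    using assms by simp
  moreover have "(\<alpha> - \<beta>) ^ 2 + 4 * cmod g ^ 2 < (2 - (\<alpha> + \<beta>)) ^ 2"
    using assms by (simp add: power2_eq_square algebra_simps)
  ultimately have "sqrt ((\<alpha> - \<beta>) ^ 2 + 4 * cmod g ^ 2) < 2 - (\<alpha> + \<beta>)"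
    by (rule real_less_lsqrt)
  then show ?thesis
    unfolding hermitian2_max_eigenvalue_def by simp
qed

lemma hermitian2_max_eigenvalue_nonneg:
  assumes "0 \<le> \<alpha>" "0 \<le> \<beta>"
  shows "0 \<le> hermitian2_max_eigenvalue \<alpha> \<beta> g"
  using assms unfolding hermitian2_max_eigenvalue_def by simp

lemma norm_vec2_power2: "norm (x :: 'a::real_normed_vector^2) ^ 2 = norm (x $ 1) ^ 2 + norm (x $ 2) ^ 2"
  unfolding norm_vec_def L2_set_def by (simp add: sum_2)

lemma tetrablock_imp_symmetric_contraction:
  assumes "tetrablock a b p"
  obtains M :: "complex^2^2"
  where "onorm (\<lambda>v. M *v v) < 1" "transpose M = M" "M $ 1 $ 1 = a" "M $ 2 $ 2 = b" "det M = p"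
proof -
  have p: "cmod p < 1" and cond6: "cmod a ^ 2 + cmod b ^ 2 - cmod p ^ 2 + 2 * cmod (a * b - p) < 1"
    using assms tetrablock_iff_cond6 by blast+
  define w where "w = csqrt (a * b - p)"
  have ww: "w * w = a * b - p"
    by (metis power2_csqrt power2_eq_square w_def)
  define M :: "complex^2^2" where "M = vector [vector [a, w], vector [w, b]]"
  define \<alpha> \<beta> g where "\<alpha> = cmod a ^ 2 + cmod w ^ 2" and "\<beta> = cmod b ^ 2 + cmod w ^ 2"
    and "g = cnj a * w + cnj w * b"
  define \<mu> where "\<mu> = hermitian2_max_eigenvalue \<alpha> \<beta> g"
  have w_sq: "cmod w ^ 2 = cmod (a * b - p)"
    by (metis ww norm_mult power2_eq_square)
  have "cmod g ^ 2 = \<alpha> * \<beta> - cmod (a * b - w * w) ^ 2"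
    unfolding \<alpha>_def \<beta>_def g_def by (simp only: cmod_power2) (simp add: algebra_simps power2_eq_square)
  then have "cmod g ^ 2 = \<alpha> * \<beta> - cmod p ^ 2"
    by (simp add: ww)
  moreover have "\<alpha> + \<beta> < 1 + cmod p ^ 2" "cmod p ^ 2 < 1"
    using cond6 p w_sq unfolding \<alpha>_def \<beta>_def by (simp_all add: abs_square_less_1)
  ultimately have "\<mu> < 1"
    unfolding \<mu>_def by (rule hermitian2_max_eigenvalue_less_one)
  have "0 \<le> \<mu>"
    unfolding \<mu>_def \<alpha>_def \<beta>_def by (intro hermitian2_max_eigenvalue_nonneg) simp_all
  have "norm (M *v x) \<le> sqrt \<mu> * norm x" for x
  proof -
    have "norm (M *v x) ^ 2 = cmod (a * x $ 1 + w * x $ 2) ^ 2 + cmod (w * x $ 1 + b * x $ 2) ^ 2"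
      by (simp add: norm_vec2_power2 M_def matrix_vector_mult_def sum_2)
    also have "\<dots> = \<alpha> * cmod (x $ 1) ^ 2 + \<beta> * cmod (x $ 2) ^ 2 + 2 * Re (g * cnj (x $ 1) * x $ 2)"
      unfolding \<alpha>_def \<beta>_def g_def by (simp only: cmod_power2) (simp add: algebra_simps power2_eq_square)
    also have "\<dots> \<le> \<mu> * (cmod (x $ 1) ^ 2 + cmod (x $ 2) ^ 2)"
      unfolding \<mu>_def by (rule hermitian2_quadratic_form_le)
    also have "\<dots> = (sqrt \<mu> * norm x) ^ 2"
      using \<open>0 \<le> \<mu>\<close> by (simp add: power_mult_distrib norm_vec2_power2)
    finally show ?thesis
      by (rule power2_le_imp_le) (simp add: \<open>0 \<le> \<mu>\<close>)
  qed
  then have "onorm (\<lambda>v. M *v v) \<le> sqrt \<mu>"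
    by (rule onorm_le)
  also have "sqrt \<mu> < 1"
    using \<open>\<mu> < 1\<close> \<open>0 \<le> \<mu>\<close> by simp
  finally have "onorm (\<lambda>v. M *v v) < 1" .
  moreover have "transpose M = M"
    by (simp add: M_def transpose_def vec_eq_iff forall_2)
  moreover have "M $ 1 $ 1 = a" "M $ 2 $ 2 = b"
    by (simp_all add: M_def)
  moreover have "det M = p"
    using ww by (simp add: M_def det_2)
  ultimately show thesis
    by (rule that)
qed

lemma tetrablock_iff_contraction:
  "tetrablock a b p \<longleftrightarrow>
     (\<exists>M :: complex^2^2. onorm (\<lambda>v. M *v v) < 1 \<and> M $ 1 $ 1 = a \<and> M $ 2 $ 2 = b \<and> det M = p)"
  by (metis contraction_imp_tetrablock tetrablock_imp_symmetric_contraction)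

lemma tetrablock_iff_symmetric_contraction:
  "tetrablock a b p \<longleftrightarrow> (\<exists>M :: complex^2^2. onorm (\<lambda>v. M *v v) < 1 \<and> transpose M = M \<and>
     M $ 1 $ 1 = a \<and> M $ 2 $ 2 = b \<and> det M = p)"
  by (metis contraction_imp_tetrablock tetrablock_imp_symmetric_contraction)

lemma scaled_norms:
  assumes "0 < c" "u = of_real c * a" "v = of_real c * b"
  shows "cmod u = c * cmod a" "cmod v = c * cmod b"
    "cmod (u - cnj v * q) = c * cmod (a - cnj b * q)" "cmod (v - cnj u * q) = c * cmod (b - cnj a * q)"
    "cmod (u * v - of_real (c ^ 2) * q) = c ^ 2 * cmod (a * b - q)"
proof -
  have "u - cnj v * q = of_real c * (a - cnj b * q)" "v - cnj u * q = of_real c * (b - cnj a * q)"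
    "u * v - of_real (c ^ 2) * q = of_real (c ^ 2) * (a * b - q)"
    using assms by (simp_all add: algebra_simps power2_eq_square)
  then show "cmod u = c * cmod a" "cmod v = c * cmod b"
    "cmod (u - cnj v * q) = c * cmod (a - cnj b * q)" "cmod (v - cnj u * q) = c * cmod (b - cnj a * q)"
    "cmod (u * v - of_real (c ^ 2) * q) = c ^ 2 * cmod (a * b - q)"
    using assms by (simp_all add: norm_mult del: of_real_power)
qed

lemma scaled_cond2_iff_tetrablock:
  assumes "0 < c" "u = of_real c * a" "v = of_real c * b"
  shows "(\<forall>z\<in>cball 0 1. \<forall>w\<in>cball 0 1. of_real c - u * z - v * w + of_real c * q * z * w \<noteq> 0)
           \<longleftrightarrow> tetrablock a b q"
proof -
  have "of_real c - u * z - v * w + of_real c * q * z * w = of_real c * (1 - a * z - b * w + q * z * w)" for z w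
    using assms by (simp add: algebra_simps)
  then show ?thesis
    unfolding tetrablock_def using assms(1) by simp
qed

lemma scaled_cond4_iff_tetrablock:
  assumes "0 < c" "u = of_real c * a" "v = of_real c * b"
  shows "c * cmod (u - cnj v * q) + cmod (u * v - of_real (c ^ 2) * q) < c ^ 2 - cmod v ^ 2
           \<longleftrightarrow> tetrablock a b q"
proof -
  have "c * cmod (u - cnj v * q) + cmod (u * v - of_real (c ^ 2) * q)
      = c ^ 2 * (cmod (a - cnj b * q) + cmod (a * b - q))" "c ^ 2 - cmod v ^ 2 = c ^ 2 * (1 - cmod b ^ 2)"
    unfolding scaled_norms[OF assms] by (simp_all add: power2_eq_square algebra_simps)
  then show ?thesis
    using assms(1) by (simp add: tetrablock_iff_cond4)
qed

lemma scaled_cond4'_iff_tetrablock: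
  assumes "0 < c" "u = of_real c * a" "v = of_real c * b"
  shows "c * cmod (v - cnj u * q) + cmod (u * v - of_real (c ^ 2) * q) < c ^ 2 - cmod u ^ 2
           \<longleftrightarrow> tetrablock a b q"
  using scaled_cond4_iff_tetrablock[OF assms(1,3,2)] by (simp add: mult.commute tetrablock_commute)

lemma scaled_cond5_iff_tetrablock:
  assumes "0 < c" "u = of_real c * a" "v = of_real c * b"
  shows "cmod u ^ 2 - cmod v ^ 2 + c ^ 2 * cmod q ^ 2 + 2 * c * cmod (v - cnj u * q) < c ^ 2 \<and> cmod v < c
           \<longleftrightarrow> tetrablock a b q"
proof -
  have "cmod u ^ 2 - cmod v ^ 2 + c ^ 2 * cmod q ^ 2 + 2 * c * cmod (v - cnj u * q)
      = c ^ 2 * (cmod a ^ 2 - cmod b ^ 2 + cmod q ^ 2 + 2 * cmod (b - cnj a * q))"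
    unfolding scaled_norms[OF assms] by (simp add: power2_eq_square algebra_simps)
  then show ?thesis
    using assms(1) by (simp add: tetrablock_iff_cond5 scaled_norms[OF assms])
qed

lemma scaled_cond5'_iff_tetrablock:
  assumes "0 < c" "u = of_real c * a" "v = of_real c * b"
  shows "cmod v ^ 2 - cmod u ^ 2 + c ^ 2 * cmod q ^ 2 + 2 * c * cmod (u - cnj v * q) < c ^ 2 \<and> cmod u < c
           \<longleftrightarrow> tetrablock a b q"
  using scaled_cond5_iff_tetrablock[OF assms(1,3,2)] by (simp add: tetrablock_commute)

lemma scaled_cond6_iff_tetrablock:
  assumes "0 < c" "u = of_real c * a" "v = of_real c * b"
  shows "cmod q < 1 \<and> cmod u ^ 2 + cmod v ^ 2 - c ^ 2 * cmod q ^ 2 + 2 * cmod (u * v - of_real (c ^ 2) * q) < c ^ 2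
           \<longleftrightarrow> tetrablock a b q"
proof -
  have "cmod u ^ 2 + cmod v ^ 2 - c ^ 2 * cmod q ^ 2 + 2 * cmod (u * v - of_real (c ^ 2) * q)
      = c ^ 2 * (cmod a ^ 2 + cmod b ^ 2 - cmod q ^ 2 + 2 * cmod (a * b - q))"
    unfolding scaled_norms[OF assms] by (simp add: power2_eq_square algebra_simps)
  then show ?thesis
    using assms(1) by (simp add: tetrablock_iff_cond6)
qed

lemma scaled_cond7_iff_tetrablock:
  assumes "0 < c" "u = of_real c * a" "v = of_real c * b"
  shows "cmod (v - cnj u * q) + cmod (u - cnj v * q) < c * (1 - cmod q ^ 2) \<longleftrightarrow> tetrablock a b q"
  using assms(1) by (simp add: scaled_norms[OF assms] tetrablock_iff_cond7 flip: distrib_left)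

lemma scaled_cond8_iff_tetrablock:
  assumes "0 < c" "u = of_real c * a" "v = of_real c * b"
  shows "(\<exists>M :: complex^2^2. onorm (\<lambda>v. M *v v) < 1 \<and>
            u = of_real c * M $ 1 $ 1 \<and> v = of_real c * M $ 2 $ 2 \<and> det M = q)
           \<longleftrightarrow> tetrablock a b q"
  using assms by (simp add: tetrablock_iff_contraction eq_commute[of a] eq_commute[of b])

lemma scaled_cond9_iff_tetrablock:
  assumes "0 < c" "u = of_real c * a" "v = of_real c * b"
  shows "(\<exists>M :: complex^2^2. onorm (\<lambda>v. M *v v) < 1 \<and> transpose M = M \<and>
            u = of_real c * M $ 1 $ 1 \<and> v = of_real c * M $ 2 $ 2 \<and> det M = q)
           \<longleftrightarrow> tetrablock a b q"
  using assms by (simp add: tetrablock_iff_symmetric_contraction eq_commute[of a] eq_commute[of b])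

lemma cb_pos: "j \<le> n \<Longrightarrow> 0 < cb n j"
  by (simp add: cb_def)

lemma cb_symmetric: "j \<le> n \<Longrightarrow> cb n (n - j) = cb n j"
  by (simp add: cb_def binomial_symmetric[symmetric])

lemma Phi_Hinf_eq_moebius_Hinf:
  assumes "0 < cb n j" "y j = of_real (cb n j) * a" "y (n - j) = of_real (cb n j) * b"
  shows "Phi_Hinf n y q j = moebius_Hinf a b q"
proof -
  have c: "(of_real (cb n j) :: complex) \<noteq> 0"
    using assms(1) by simp
  have degenerate: "y j * y (n - j) = of_real (cb n j ^ 2) * q \<longleftrightarrow> a * b = q"
    using assms c by (simp add: power2_eq_square algebra_simps)
  have "Phi_defined n y q j z \<longleftrightarrow> a * b = q \<or> b * z \<noteq> 1" for z
    using assms c unfolding Phi_defined_def degenerate by (auto simp: mult.assoc)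
  moreover have "Phi n y q j z = moebius a b q z" for z
  proof -
    have "(of_real (cb n j) * q * z - y j) / (y (n - j) * z - of_real (cb n j))
        = (of_real (cb n j) * (q * z - a)) / (of_real (cb n j) * (b * z - 1))"
      using assms by (simp add: algebra_simps)
    then show ?thesis
      using assms c unfolding Phi_def moebius_def degenerate by simp
  qed
  ultimately show ?thesis
    unfolding Phi_Hinf_def moebius_Hinf_def by simp
qed

lemma scaled_cond3_iff_tetrablock:
  assumes "j \<le> n" "y j = of_real (cb n j) * a" "y (n - j) = of_real (cb n j) * b"
  shows "Phi_Hinf n y q j < 1 \<and> (y j * y (n - j) = of_real (cb n j ^ 2) * q \<longrightarrow> cmod (y (n - j)) < cb n j)
           \<longleftrightarrow> tetrablock a b q"
proof -
  have c: "0 < cb n j"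
    using assms(1) by (rule cb_pos)
  have "y j * y (n - j) = of_real (cb n j ^ 2) * q \<longleftrightarrow> a * b = q"
    using assms c by (simp add: power2_eq_square algebra_simps)
  moreover have "cmod (y (n - j)) < cb n j \<longleftrightarrow> cmod b < 1"
    using assms c by (simp add: norm_mult)
  ultimately show ?thesis
    by (simp add: Phi_Hinf_eq_moebius_Hinf[OF c assms(2,3)] tetrablock_iff_moebius_Hinf)
qed

lemma scaled_cond3'_iff_tetrablock:
  assumes "j \<le> n" "y j = of_real (cb n j) * a" "y (n - j) = of_real (cb n j) * b"
  shows "Phi_Hinf n y q (n - j) < 1 \<and> (y j * y (n - j) = of_real (cb n j ^ 2) * q \<longrightarrow> cmod (y j) < cb n j)
           \<longleftrightarrow> tetrablock a b q"
proof -
  have "n - (n - j) = j" "cb n (n - j) = cb n j"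
    using assms(1) cb_symmetric by auto
  then have "Phi_Hinf n y q (n - j) < 1 \<and> (y (n - j) * y (n - (n - j)) = of_real (cb n (n - j) ^ 2) * q
        \<longrightarrow> cmod (y (n - (n - j))) < cb n (n - j)) \<longleftrightarrow> tetrablock b a q"
    using assms by (intro scaled_cond3_iff_tetrablock) simp_all
  then show ?thesis
    using \<open>n - (n - j) = j\<close> \<open>cb n (n - j) = cb n j\<close> by (simp add: mult.commute tetrablock_commute)
qed

lemma beta_eq_of_decomposition:
  assumes "y1 = \<beta>1 + cnj \<beta>2 * q" "y2 = \<beta>2 + cnj \<beta>1 * q"
  shows "y1 - cnj y2 * q = \<beta>1 * of_real (1 - cmod q ^ 2)"
  using assms unfolding of_real_diff of_real_1 complex_norm_square by (simp add: algebra_simps)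

lemma decomposition_of_beta_formula:
  assumes "cmod q < 1"
  shows "y1 = (y1 - cnj y2 * q) / of_real (1 - cmod q ^ 2) + cnj ((y2 - cnj y1 * q) / of_real (1 - cmod q ^ 2)) * q"
proof -
  define k :: complex where "k = of_real (1 - cmod q ^ 2)"
  have "cmod q ^ 2 < 1"
    using assms by (simp add: abs_square_less_1)
  then have "k \<noteq> 0" "cnj k = k"
    by (simp_all add: k_def del: of_real_diff)
  moreover have "y1 - cnj y2 * q + cnj (y2 - cnj y1 * q) * q = y1 * k"
    unfolding k_def of_real_diff of_real_1 complex_norm_square by (simp add: algebra_simps)
  ultimately show ?thesis
    unfolding k_def[symmetric] by (simp add: field_simps)
qed

lemma tetrablock_n_imp_cond7:
  assumes "tetrablock_n n y q" "j \<in> {1..n div 2}"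
  shows "cmod (y (n - j) - cnj (y j) * q) + cmod (y j - cnj (y (n - j)) * q) < cb n j * (1 - cmod q ^ 2)"
proof -
  obtain \<beta> where q: "cmod q < 1" and \<beta>: "\<forall>j\<in>{1..n-1}. y j = \<beta> j + cnj (\<beta> (n - j)) * q \<and>
      cmod (\<beta> j) + cmod (\<beta> (n - j)) < cb n j"
    using assms(1) unfolding tetrablock_n_def by blast
  have j: "j \<in> {1..n-1}" "n - j \<in> {1..n-1}" "n - (n - j) = j"
    using assms(2) by auto
  then have y: "y j = \<beta> j + cnj (\<beta> (n - j)) * q" "y (n - j) = \<beta> (n - j) + cnj (\<beta> j) * q"
    using \<beta> by force+
  have "0 < 1 - cmod q ^ 2"
    using q by (simp add: abs_square_less_1)
  have "cmod (y (n - j) - cnj (y j) * q) + cmod (y j - cnj (y (n - j)) * q)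
      = (cmod (\<beta> j) + cmod (\<beta> (n - j))) * (1 - cmod q ^ 2)"
    using \<open>0 < 1 - cmod q ^ 2\<close>
    unfolding beta_eq_of_decomposition[OF y] beta_eq_of_decomposition[OF y(2,1)] norm_mult norm_of_real
    by (simp add: algebra_simps)
  also have "\<dots> < cb n j * (1 - cmod q ^ 2)"
    using \<beta> j(1) \<open>0 < 1 - cmod q ^ 2\<close> by simp
  finally show ?thesis .
qed

lemma cond7_imp_tetrablock_n:
  assumes "2 \<le> n"
    and cond7: "\<forall>j\<in>{1..n div 2}.
      cmod (y (n - j) - cnj (y j) * q) + cmod (y j - cnj (y (n - j)) * q) < cb n j * (1 - cmod q ^ 2)"
  shows "tetrablock_n n y q"
proof -
  define k where "k = 1 - cmod q ^ 2"
  define \<beta> where "\<beta> j = (y j - cnj (y (n - j)) * q) / of_real k" for j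
  have "1 \<in> {1..n div 2}"
    using assms(1) by auto
  then have "cmod (y (n - 1) - cnj (y 1) * q) + cmod (y 1 - cnj (y (n - 1)) * q) < cb n 1 * k"
    using cond7 unfolding k_def by blast
  then have "0 < cb n 1 * k"
    using norm_ge_zero[of "y (n - 1) - cnj (y 1) * q"] norm_ge_zero[of "y 1 - cnj (y (n - 1)) * q"]
    by linarith
  then have "0 < k"
    using cb_pos[of 1 n] assms(1) by (simp add: zero_less_mult_iff)
  then have q: "cmod q < 1"
    unfolding k_def by (simp add: abs_square_less_1)
  have sum_less: "cmod (y (n - j) - cnj (y j) * q) + cmod (y j - cnj (y (n - j)) * q) < cb n j * k"
    if j: "j \<in> {1..n-1}" for j
  proof (cases "j \<le> n div 2")
    case True
    then show ?thesis
      using cond7 j unfolding k_def by auto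
  next
    case False
    then have "n - j \<in> {1..n div 2}" "n - (n - j) = j" "cb n (n - j) = cb n j"
      using j cb_symmetric[of j n] by auto
    then show ?thesis
      using cond7 unfolding k_def by (metis add.commute)
  qed
  have "y j = \<beta> j + cnj (\<beta> (n - j)) * q \<and> cmod (\<beta> j) + cmod (\<beta> (n - j)) < cb n j"
    if j: "j \<in> {1..n-1}" for j
  proof
    have "n - (n - j) = j"
      using j by auto
    then show "y j = \<beta> j + cnj (\<beta> (n - j)) * q"
      using decomposition_of_beta_formula[of q "y j" "y (n - j)"] q unfolding \<beta>_def k_def by simp
    have "cmod (\<beta> j) + cmod (\<beta> (n - j))
        = (cmod (y (n - j) - cnj (y j) * q) + cmod (y j - cnj (y (n - j)) * q)) / k"
      using \<open>0 < k\<close> \<open>n - (n - j) = j\<close> unfolding \<beta>_def by (simp add: norm_divide add_divide_distrib)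
    also have "\<dots> < cb n j"
      using sum_less[OF j] \<open>0 < k\<close> by (simp add: divide_less_eq)
    finally show "cmod (\<beta> j) + cmod (\<beta> (n - j)) < cb n j" .
  qed
  with q show ?thesis
    unfolding tetrablock_n_def by blast
qed

theorem mainTheorem2:
  fixes n :: nat and y :: "nat \<Rightarrow> complex" and q :: complex
  assumes "n \<ge> 2"
  defines "c \<equiv> cb n"
  defines "P1 \<equiv> tetrablock_n n y q"
  defines "P2 \<equiv> (\<forall>j\<in>{1..n div 2}. \<forall>z\<in>cball 0 1. \<forall>w\<in>cball 0 1.
              of_real (c j) - y j * z - y (n - j) * w + of_real (c j) * q * z * w \<noteq> 0)"
  defines "P3 \<equiv> (\<forall>j\<in>{1..n div 2}. Phi_Hinf n y q j < 1 \<and>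
              (y j * y (n - j) = of_real (c j ^ 2) * q \<longrightarrow> cmod (y (n - j)) < c j))"
  defines "P3' \<equiv> (\<forall>j\<in>{1..n div 2}. Phi_Hinf n y q (n - j) < 1 \<and>
              (y j * y (n - j) = of_real (c j ^ 2) * q \<longrightarrow> cmod (y j) < c j))"
  defines "P4 \<equiv> (\<forall>j\<in>{1..n div 2}.
              c j * cmod (y j - cnj (y (n - j)) * q) + cmod (y j * y (n - j) - of_real (c j ^ 2) * q)
              < c j ^ 2 - cmod (y (n - j)) ^ 2)"
  defines "P4' \<equiv> (\<forall>j\<in>{1..n div 2}.
              c j * cmod (y (n - j) - cnj (y j) * q) + cmod (y j * y (n - j) - of_real (c j ^ 2) * q)
              < c j ^ 2 - cmod (y j) ^ 2)"
  defines "P5 \<equiv> (\<forall>j\<in>{1..n div 2}.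
              cmod (y j) ^ 2 - cmod (y (n - j)) ^ 2 + c j ^ 2 * cmod q ^ 2
                + 2 * c j * cmod (y (n - j) - cnj (y j) * q) < c j ^ 2
              \<and> cmod (y (n - j)) < c j)"
  defines "P5' \<equiv> (\<forall>j\<in>{1..n div 2}.
              cmod (y (n - j)) ^ 2 - cmod (y j) ^ 2 + c j ^ 2 * cmod q ^ 2
                + 2 * c j * cmod (y j - cnj (y (n - j)) * q) < c j ^ 2
              \<and> cmod (y j) < c j)"
  defines "P6 \<equiv> (cmod q < 1 \<and> (\<forall>j\<in>{1..n div 2}.
              cmod (y j) ^ 2 + cmod (y (n - j)) ^ 2 - c j ^ 2 * cmod q ^ 2
                + 2 * cmod (y j * y (n - j) - of_real (c j ^ 2) * q) < c j ^ 2))"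
  defines "P7 \<equiv> (\<forall>j\<in>{1..n div 2}.
              cmod (y (n - j) - cnj (y j) * q) + cmod (y j - cnj (y (n - j)) * q)
              < c j * (1 - cmod q ^ 2))"
  defines "P8 \<equiv> (\<exists>B :: nat \<Rightarrow> complex^2^2. \<forall>j\<in>{1..n div 2}.
              onorm (\<lambda>v. B j *v v) < 1 \<and>
              y j = of_real (c j) * B j $ 1 $ 1 \<and> y (n - j) = of_real (c j) * B j $ 2 $ 2 \<and>
              det (B j) = q)"
  defines "P9 \<equiv> (\<exists>B :: nat \<Rightarrow> complex^2^2. \<forall>j\<in>{1..n div 2}.
              onorm (\<lambda>v. B j *v v) < 1 \<and> transpose (B j) = B j \<and>
              y j = of_real (c j) * B j $ 1 $ 1 \<and> y (n - j) = of_real (c j) * B j $ 2 $ 2 \<and>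
              det (B j) = q)"
  shows "(P1 \<longleftrightarrow> P2) \<and> (P1 \<longleftrightarrow> P3) \<and> (P1 \<longleftrightarrow> P3') \<and> (P1 \<longleftrightarrow> P4) \<and> (P1 \<longleftrightarrow> P4')
       \<and> (P1 \<longleftrightarrow> P5) \<and> (P1 \<longleftrightarrow> P5') \<and> (P1 \<longleftrightarrow> P6) \<and> (P1 \<longleftrightarrow> P7)
       \<and> (P1 \<longleftrightarrow> P8) \<and> (P1 \<longleftrightarrow> P9)"
proof -
  let ?R = "{1..n div 2}"
  have "1 \<in> ?R"
    using assms by auto
  define a b where "a j = y j / of_real (cb n j)" and "b j = y (n - j) / of_real (cb n j)" for j
  have scale: "j \<le> n" "0 < cb n j" "y j = of_real (cb n j) * a j" "y (n - j) = of_real (cb n j) * b j"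
    if "j \<in> ?R" for j
    using that le_trans[OF _ div_le_dividend, of j n 2] cb_pos[of j n] unfolding a_def b_def by auto
  define T where "T \<longleftrightarrow> (\<forall>j\<in>?R. tetrablock (a j) (b j) q)"
  have "P2 = T" "P3 = T" "P3' = T" "P4 = T" "P4' = T" "P5 = T" "P5' = T" "P7 = T"
    unfolding P2_def P3_def P3'_def P4_def P4'_def P5_def P5'_def P7_def T_def c_def
    by (intro ball_cong refl scaled_cond2_iff_tetrablock scaled_cond3_iff_tetrablock
        scaled_cond3'_iff_tetrablock scaled_cond4_iff_tetrablock scaled_cond4'_iff_tetrablock
        scaled_cond5_iff_tetrablock scaled_cond5'_iff_tetrablock scaled_cond7_iff_tetrablock;
        simp add: scale)+
  moreover have "P8 = T"
    unfolding P8_def T_def c_def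
    by (subst bchoice_iff[symmetric], intro ball_cong refl scaled_cond8_iff_tetrablock; simp add: scale)
  moreover have "P9 = T"
    unfolding P9_def T_def c_def
    by (subst bchoice_iff[symmetric], intro ball_cong refl scaled_cond9_iff_tetrablock; simp add: scale)
  moreover have "P6 \<longleftrightarrow> (\<forall>j\<in>?R. cmod q < 1 \<and> cmod (y j) ^ 2 + cmod (y (n - j)) ^ 2
      - cb n j ^ 2 * cmod q ^ 2 + 2 * cmod (y j * y (n - j) - of_real (cb n j ^ 2) * q) < cb n j ^ 2)"
    unfolding P6_def c_def using \<open>1 \<in> ?R\<close> by blast
  moreover have "\<dots> \<longleftrightarrow> T"
    unfolding T_def by (intro ball_cong refl scaled_cond6_iff_tetrablock; simp add: scale)
  moreover have "P1 = P7"
    unfolding P1_def P7_def c_def using assms tetrablock_n_imp_cond7 cond7_imp_tetrablock_n by blast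
  ultimately show ?thesis
    by simp
qed

end
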